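(* Let $X,Y\subseteq\Sigma^*$ be regular languages. Then $\overrightarrow{\mathrm{AH}}_{\mathrm{ned}}(X,Y)\le\overrightarrow{\mathrm{AC}}(X,Y)$.
   Context: An edit path from $x$ to $y$ is a sequence $p=(a_1,b_1)\cdots(a_n,b_n)$ with $(a_i,b_i)\in(\Sigma\cup\{\varepsilon\})^2\setminus\{(\varepsilon,\varepsilon)\}$, $a_1\cdots a_n=x$, $b_1\cdots b_n=y$; $|p|=n$ and $\mathrm{wgt}(p)=|\{i:a_i\ne b_i\}|$. $\mathrm{ed}(x,y)=\min_p\mathrm{wgt}(p)$; $\mathrm{ned}(x,y)=\min_p\mathrm{wgt}(p)/|p|$ ($\mathrm{ned}(\varepsilon,\varepsilon)=0$). $\overrightarrow{\mathrm{AH}}_{\mathrm{ned}}(X,Y)=\lim_{k\to\infty}\sup_{x\in X,|x|\ge k}\inf_{y\in Y}\mathrm{ned}(x,y)$ and $\overrightarrow{\mathrm{AC}}(X,Y)=\lim_{n\to\infty}\sup_{x\in X,|x|\ge n}\inf_{y\in Y}\frac{\mathrm{ed}(x,y)}{|x|}$. *)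

theory Defs
  imports Complex_Main "HOL-Library.Extended_Real"
begin

text \<open>An edit step is a pair (a,b) with a,b in Sigma \<union> {epsilon}, not both epsilon;
  epsilon is modelled by None.\<close>

definition edit_path :: "('a option \<times> 'a option) list \<Rightarrow> 'a list \<Rightarrow> 'a list \<Rightarrow> bool" where
  "edit_path p x y \<longleftrightarrow>
     (\<forall>s\<in>set p. s \<noteq> (None, None)) \<and>
     concat (map (\<lambda>s. case fst s of None \<Rightarrow> [] | Some a \<Rightarrow> [a]) p) = x \<and>
     concat (map (\<lambda>s. case snd s of None \<Rightarrow> [] | Some b \<Rightarrow> [b]) p) = y"

definition wgt :: "('a option \<times> 'a option) list \<Rightarrow> nat" where
  "wgt p = length (filter (\<lambda>s. fst s \<noteq> snd s) p)"

definition ed :: "'a list \<Rightarrow> 'a list \<Rightarrow> nat" where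
  "ed x y = Min {wgt p | p. edit_path p x y}"

text \<open>For x = y = epsilon only the empty path exists, and 0/0 = 0, so ned(eps,eps) = 0.\<close>
definition ned :: "'a list \<Rightarrow> 'a list \<Rightarrow> real" where
  "ned x y = Min {real (wgt p) / real (length p) | p. edit_path p x y}"

definition regular_lang :: "'a set \<Rightarrow> 'a list set \<Rightarrow> bool" where
  "regular_lang \<Sigma> L \<longleftrightarrow> L \<subseteq> lists \<Sigma> \<and>
     (\<exists>(Q::nat set) q0 \<delta> F. finite Q \<and> q0 \<in> Q \<and> F \<subseteq> Q \<and>
        (\<forall>q\<in>Q. \<forall>a\<in>\<Sigma>. \<delta> q a \<in> Q) \<and>
        L = {w \<in> lists \<Sigma>. foldl \<delta> q0 w \<in> F})"

definition AH_ned :: "'a list set \<Rightarrow> 'a list set \<Rightarrow> ereal" where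
  "AH_ned X Y = lim (\<lambda>k::nat. SUP x\<in>{x\<in>X. length x \<ge> k}. INF y\<in>Y. ereal (ned x y))"

definition AC :: "'a list set \<Rightarrow> 'a list set \<Rightarrow> ereal" where
  "AC X Y = lim (\<lambda>n::nat. SUP x\<in>{x\<in>X. length x \<ge> n}.
              INF y\<in>Y. ereal (real (ed x y) / real (length x)))"

end

theory Submission
  imports Defs
begin

text \<open>Every edit path from \<open>x\<close> to \<open>y\<close> has at least \<open>|x|\<close> steps, so for a path \<open>p\<close> realising
  \<open>ed(x,y)\<close> we get \<open>ned(x,y) \<le> wgt(p)/|p| \<le> ed(x,y)/|x|\<close>. This pointwise bound survives the
  infimum over \<open>y\<close>, the supremum over long \<open>x\<close> and the limit of the (decreasing) tail suprema.\<close>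

lemma length_concat_map_le:
  assumes "\<And>s. length (f s) \<le> 1"
  shows "length (concat (map f p)) \<le> length p"
proof (induction p)
  case (Cons s p)
  then show ?case
    using assms[of s] by simp
qed simp

lemma edit_path_length_ge:
  assumes "edit_path p x y"
  shows "length x \<le> length p"
proof -
  have "length (concat (map (\<lambda>s. case fst s of None \<Rightarrow> [] | Some a \<Rightarrow> [a]) p)) \<le> length p"
    by (rule length_concat_map_le) (simp split: option.split)
  then show ?thesis
    using assms unfolding edit_path_def by simp
qed

lemma edit_path_length_le:
  assumes "edit_path p x y"
  shows "length p \<le> length x + length y"
proof -
  have "length p \<le> length (concat (map (\<lambda>s. case fst s of None \<Rightarrow> [] | Some a \<Rightarrow> [a]) p))
      + length (concat (map (\<lambda>s. case snd s of None \<Rightarrow> [] | Some b \<Rightarrow> [b]) p))"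
    if "\<forall>s\<in>set p. s \<noteq> (None, None)" for p :: "('a option \<times> 'a option) list"
    using that
  proof (induction p)
    case (Cons s p)
    then show ?case by (cases s; cases "fst s"; cases "snd s") auto
  qed simp
  then show ?thesis
    using assms unfolding edit_path_def by blast
qed

lemma edit_path_exists: "\<exists>p. edit_path p x y"
proof
  show "edit_path (map (\<lambda>a. (Some a, None)) x @ map (\<lambda>b. (None, Some b)) y) x y"
    unfolding edit_path_def by (induction x) (auto, induction y, auto)
qed

lemma wgt_le_length: "wgt p \<le> length p"
  unfolding wgt_def by simp

lemma finite_wgt_length_edit_paths: "finite {(wgt p, length p) | p. edit_path p x y}"
proof (rule finite_subset)
  let ?n = "length x + length y"
  show "{(wgt p, length p) | p. edit_path p x y} \<subseteq> {..?n} \<times> {..?n}"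
    using edit_path_length_le wgt_le_length le_trans by fastforce
qed simp

lemma ed_attained: "\<exists>p. edit_path p x y \<and> wgt p = ed x y"
proof -
  have weights: "{wgt p | p. edit_path p x y} = fst ` {(wgt p, length p) | p. edit_path p x y}"
    by force
  have "finite {wgt p | p. edit_path p x y}"
    unfolding weights by (rule finite_imageI[OF finite_wgt_length_edit_paths])
  moreover have "{wgt p | p. edit_path p x y} \<noteq> {}"
    using edit_path_exists by blast
  ultimately have "ed x y \<in> {wgt p | p. edit_path p x y}"
    unfolding ed_def by (rule Min_in)
  then show ?thesis by auto
qed

lemma ned_le_path_ratio:
  assumes "edit_path p x y"
  shows "ned x y \<le> real (wgt p) / real (length p)"
proof -
  let ?R = "{real (wgt p) / real (length p) | p. edit_path p x y}"
  have ratios: "?R = (\<lambda>(w, l). real w / real l) ` {(wgt p, length p) | p. edit_path p x y}"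
    by force
  have "finite ?R"
    unfolding ratios by (rule finite_imageI[OF finite_wgt_length_edit_paths])
  then show ?thesis
    unfolding ned_def using assms by (auto intro: Min_le)
qed

lemma ned_le_ed_div_length:
  assumes "x \<noteq> []"
  shows "ned x y \<le> real (ed x y) / real (length x)"
proof -
  obtain p where p: "edit_path p x y" "wgt p = ed x y"
    using ed_attained by blast
  have "ned x y \<le> real (wgt p) / real (length p)"
    using ned_le_path_ratio[OF p(1)] .
  also have "\<dots> \<le> real (wgt p) / real (length x)"
    using edit_path_length_ge[OF p(1)] assms by (simp add: frac_le)
  finally show ?thesis
    using p(2) by simp
qed

lemma lim_SUP_tail_mono:
  fixes F G :: "'b \<Rightarrow> 'c::{complete_linorder, linorder_topology}"
  assumes "\<And>x. x \<in> X \<Longrightarrow> m \<le> \<mu> x \<Longrightarrow> F x \<le> G x"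
  shows "lim (\<lambda>k. SUP x\<in>{x\<in>X. k \<le> \<mu> x}. F x) \<le> lim (\<lambda>k. SUP x\<in>{x\<in>X. k \<le> \<mu> x}. G x)"
proof -
  define f where "f k = (SUP x\<in>{x\<in>X. k \<le> \<mu> x}. F x)" for k :: nat
  define g where "g k = (SUP x\<in>{x\<in>X. k \<le> \<mu> x}. G x)" for k :: nat
  have "decseq f" "decseq g"
    unfolding f_def g_def decseq_def by (auto intro!: SUP_subset_mono)
  then have "f \<longlonglongrightarrow> (INF k. f k)" "g \<longlonglongrightarrow> (INF k. g k)"
    by (auto intro: LIMSEQ_INF)
  moreover have "f k \<le> g k" if "m \<le> k" for k
    unfolding f_def g_def using that by (intro SUP_subset_mono) (auto intro!: assms)
  ultimately have "lim f \<le> lim g"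
    by (metis LIMSEQ_le limI)
  then show ?thesis
    unfolding f_def g_def .
qed

theorem mainTheorem15:
  fixes \<Sigma> :: "'a set" and X Y :: "'a list set"
  assumes "finite \<Sigma>"
    and "regular_lang \<Sigma> X" and "regular_lang \<Sigma> Y"
  shows "AH_ned X Y \<le> AC X Y"
  unfolding AH_ned_def AC_def
proof (rule lim_SUP_tail_mono[where m = 1])
  fix x assume "x \<in> X" "1 \<le> length x"
  then show "(INF y\<in>Y. ereal (ned x y)) \<le> (INF y\<in>Y. ereal (real (ed x y) / real (length x)))"
    by (auto intro!: INF_mono' ned_le_ed_div_length)
qed

end
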